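(* For every $n\ge1$ there is a bijection $\sigma\mapsto\sigma'$ from $\mathcal{X}_{2n}$ onto $\mathcal{R}_{2n}$ such that $\mathrm{drop}(\sigma')=\mathrm{des}(\sigma)$. In particular $|\mathcal{X}_{2n}|=|\mathcal{R}_{2n}|$.
   Context: For $\sigma\in\mathfrak{S}_m$ (permutations of $[m]$), a descent is an index $i$ with $\sigma_i>\sigma_{i+1}$ (descent pair $(\sigma_i,\sigma_{i+1})$), $\mathrm{des}(\sigma)$ is the number of descents; $\mathcal{X}_{2n}$ is the set of permutations of $[2n]$ whose every descent pair $(\sigma_i,\sigma_{i+1})$ has $\sigma_i$ even and $\sigma_{i+1}$ odd. A drop of $\sigma$ is a pair $(i,\sigma_i)$ with $i>\sigma_i$ ($i$ is the drop top, $\sigma_i$ the drop bottom); $\mathrm{drop}(\sigma)$ is the number of drops. A drop is even-odd if $i$ is even and $\sigma_i$ is odd. $\mathcal{R}_{2n}$ is the set of permutations of $[2n]$ all of whose drops are even-odd. *)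

theory Defs
  imports "HOL-Combinatorics.Permutations"
begin

(* Permutations of [m] = {1..m} are functions sigma :: nat => nat with sigma permutes {1..m};
   sigma i is the i-th letter of the one-line notation. *)

definition perms :: "nat \<Rightarrow> (nat \<Rightarrow> nat) set" where
  "perms m = {\<sigma>. \<sigma> permutes {1..m}}"

definition descents :: "nat \<Rightarrow> (nat \<Rightarrow> nat) \<Rightarrow> nat set" where
  "descents m \<sigma> = {i. 1 \<le> i \<and> i < m \<and> \<sigma> i > \<sigma> (Suc i)}"

definition des :: "nat \<Rightarrow> (nat \<Rightarrow> nat) \<Rightarrow> nat" where
  "des m \<sigma> = card (descents m \<sigma>)"

definition drops :: "nat \<Rightarrow> (nat \<Rightarrow> nat) \<Rightarrow> nat set" where
  "drops m \<sigma> = {i. 1 \<le> i \<and> i \<le> m \<and> i > \<sigma> i}"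

definition drop_num :: "nat \<Rightarrow> (nat \<Rightarrow> nat) \<Rightarrow> nat" where
  "drop_num m \<sigma> = card (drops m \<sigma>)"

definition X_set :: "nat \<Rightarrow> (nat \<Rightarrow> nat) set" where
  "X_set n = {\<sigma> \<in> perms (2*n). \<forall>i \<in> descents (2*n) \<sigma>. even (\<sigma> i) \<and> odd (\<sigma> (Suc i))}"

definition R_set :: "nat \<Rightarrow> (nat \<Rightarrow> nat) set" where
  "R_set n = {\<sigma> \<in> perms (2*n). \<forall>i \<in> drops (2*n) \<sigma>. even i \<and> odd (\<sigma> i)}"

end

theory Submission imports Defs begin

(* Induction on m gives a bijection F of perms m such that the drop pairs of F sigma are exactly
   the descent pairs of sigma.  Erase the largest letter m+1 from sigma.  If it stood last, the
   descent pairs do not change.  Otherwise it was followed by some b, and the descent pairs of sigma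
   are those of the shortened word, except the one with bottom b, together with (m+1, b).  Composing
   the shorter permutation with the transposition (m+1 b) has exactly this effect on drop pairs: it
   creates the drop (m+1, b) and destroys the drop with bottom b.  Membership in X and R depends on
   these pairs alone, so F restricts to a bijection from X onto R. *)

definition descent_pairs :: "nat \<Rightarrow> (nat \<Rightarrow> nat) \<Rightarrow> (nat \<times> nat) set" where
  "descent_pairs m \<sigma> = (\<lambda>i. (\<sigma> i, \<sigma> (Suc i))) ` descents m \<sigma>"

definition drop_pairs :: "nat \<Rightarrow> (nat \<Rightarrow> nat) \<Rightarrow> (nat \<times> nat) set" where
  "drop_pairs m \<tau> = (\<lambda>i. (i, \<tau> i)) ` drops m \<tau>"

lemma card_descent_pairs: "inj \<sigma> \<Longrightarrow> card (descent_pairs m \<sigma>) = des m \<sigma>"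
  unfolding descent_pairs_def des_def
  by (rule card_image) (auto intro!: inj_onI dest: injD)

lemma card_drop_pairs: "card (drop_pairs m \<tau>) = drop_num m \<tau>"
  unfolding drop_pairs_def drop_num_def
  by (rule card_image) (auto simp: inj_on_def)

lemma mem_descent_pairs:
  "(x, y) \<in> descent_pairs m \<sigma> \<longleftrightarrow> (\<exists>i. 1 \<le> i \<and> i < m \<and> \<sigma> i = x \<and> \<sigma> (Suc i) = y \<and> y < x)"
  unfolding descent_pairs_def descents_def by auto

lemma mem_drop_pairs: "(x, y) \<in> drop_pairs m \<tau> \<longleftrightarrow> 1 \<le> x \<and> x \<le> m \<and> \<tau> x = y \<and> y < x"
  unfolding drop_pairs_def drops_def by auto

lemma X_set_descent_pairs:
  "X_set n = {\<sigma> \<in> perms (2*n). \<forall>(x, y) \<in> descent_pairs (2*n) \<sigma>. even x \<and> odd y}"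
  unfolding X_set_def descent_pairs_def by auto

lemma R_set_drop_pairs:
  "R_set n = {\<tau> \<in> perms (2*n). \<forall>(x, y) \<in> drop_pairs (2*n) \<tau>. even x \<and> odd y}"
  unfolding R_set_def drop_pairs_def by auto

lemma drop_pairs_Suc:
  assumes "\<tau> permutes {1..m}"
  shows "drop_pairs (Suc m) \<tau> = drop_pairs m \<tau>"
proof -
  have "\<tau> (Suc m) = Suc m" using permutes_not_in[OF assms] by auto
  then show ?thesis by (auto simp: mem_drop_pairs le_Suc_eq)
qed

lemma drop_pairs_transpose_Suc:
  assumes \<tau>: "\<tau> permutes {1..m}" and b: "b \<in> {1..m}"
  shows "drop_pairs (Suc m) (Transposition.transpose (Suc m) b \<circ> \<tau>)
           = {q \<in> drop_pairs m \<tau>. snd q \<noteq> b} \<union> {(Suc m, b)}"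
proof (intro set_eqI, clarify)
  fix x y
  have fixed: "\<tau> (Suc m) = Suc m" using permutes_not_in[OF \<tau>] by auto
  consider "x = Suc m" | "x \<in> {1..m}" | "x \<notin> {1..Suc m}" by force
  then show "(x, y) \<in> drop_pairs (Suc m) (Transposition.transpose (Suc m) b \<circ> \<tau>)
      \<longleftrightarrow> (x, y) \<in> {q \<in> drop_pairs m \<tau>. snd q \<noteq> b} \<union> {(Suc m, b)}"
  proof cases
    case 1
    then show ?thesis using fixed b by (auto simp: mem_drop_pairs transpose_def)
  next
    case 2
    then have "\<tau> x \<in> {1..m}" using permutes_in_image[OF \<tau>] by auto
    then show ?thesis using 2 b by (auto simp: mem_drop_pairs transpose_def)
  next
    case 3
    then show ?thesis by (auto simp: mem_drop_pairs)
  qed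
qed

lemma permutes_Suc_max_position:
  assumes "\<sigma> permutes {1..Suc m}"
  shows "inv \<sigma> (Suc m) \<in> {1..Suc m}" "\<sigma> (inv \<sigma> (Suc m)) = Suc m"
    and "x \<noteq> inv \<sigma> (Suc m) \<Longrightarrow> \<sigma> x \<noteq> Suc m"
  using permutes_in_image[OF permutes_inv[OF assms]] permutes_inverses(2)[OF assms, of x]
    permutes_inverses(1)[OF assms] by auto

text \<open>The word of \<open>\<sigma>\<close> with the letter \<open>m+1\<close> erased; \<open>inv \<sigma> (Suc m)\<close> is its position.\<close>

definition delete_max :: "nat \<Rightarrow> (nat \<Rightarrow> nat) \<Rightarrow> nat \<Rightarrow> nat" where
  "delete_max m \<sigma> = (\<lambda>i. if i < inv \<sigma> (Suc m) then \<sigma> i else if i \<le> m then \<sigma> (Suc i) else i)"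

definition after_max :: "nat \<Rightarrow> (nat \<Rightarrow> nat) \<Rightarrow> nat" where
  "after_max m \<sigma> = (if inv \<sigma> (Suc m) = Suc m then Suc m else \<sigma> (Suc (inv \<sigma> (Suc m))))"

lemma delete_max_before: "i < inv \<sigma> (Suc m) \<Longrightarrow> delete_max m \<sigma> i = \<sigma> i"
  unfolding delete_max_def by simp

lemma delete_max_after: "inv \<sigma> (Suc m) \<le> i \<Longrightarrow> i \<le> m \<Longrightarrow> delete_max m \<sigma> i = \<sigma> (Suc i)"
  unfolding delete_max_def by simp

lemma delete_max_at_max: "inv \<sigma> (Suc m) \<le> m \<Longrightarrow> delete_max m \<sigma> (inv \<sigma> (Suc m)) = after_max m \<sigma>"
  unfolding delete_max_def after_max_def by simp

lemma delete_max_permutes: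
  assumes \<sigma>: "\<sigma> permutes {1..Suc m}"
  shows "delete_max m \<sigma> permutes {1..m}"
proof (rule bij_imp_permutes)
  define p where "p = inv \<sigma> (Suc m)"
  note pos = permutes_Suc_max_position[OF \<sigma>, folded p_def]
  have shift: "delete_max m \<sigma> i = \<sigma> (if i < p then i else Suc i)" if "i \<in> {1..m}" for i
    using that unfolding delete_max_def p_def by auto
  have inj: "inj_on (delete_max m \<sigma>) {1..m}"
  proof (rule inj_onI)
    fix i j assume "i \<in> {1..m}" "j \<in> {1..m}" "delete_max m \<sigma> i = delete_max m \<sigma> j"
    then have "(if i < p then i else Suc i) = (if j < p then j else Suc j)"
      using shift permutes_inj[OF \<sigma>] by (simp add: inj_eq)
    then show "i = j" by (auto split: if_splits)
  qed
  have maps_into: "delete_max m \<sigma> i \<in> {1..m}" if i: "i \<in> {1..m}" for i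
  proof -
    let ?h = "if i < p then i else Suc i"
    have "?h \<in> {1..Suc m}" "?h \<noteq> p" using i pos(1) by auto
    then have "\<sigma> ?h \<in> {1..Suc m}" "\<sigma> ?h \<noteq> Suc m" using pos(3) permutes_in_image[OF \<sigma>] by auto
    then show ?thesis using shift[OF i] by auto
  qed
  have "delete_max m \<sigma> ` {1..m} = {1..m}"
    by (rule endo_inj_surj[OF _ _ inj]) (use maps_into in auto)
  then show "bij_betw (delete_max m \<sigma>) {1..m} {1..m}" using inj by (simp add: bij_betw_def)
  fix x assume "x \<notin> {1..m}"
  moreover have "\<sigma> 0 = 0" using permutes_not_in[OF \<sigma>] by auto
  ultimately show "delete_max m \<sigma> x = x" using pos(1) unfolding delete_max_def p_def
    by (cases "x = 0") auto
qed

lemma after_max_mem: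
  assumes \<sigma>: "\<sigma> permutes {1..Suc m}" and inner: "inv \<sigma> (Suc m) \<le> m"
  shows "after_max m \<sigma> \<in> {1..m}"
proof -
  have "\<sigma> (Suc (inv \<sigma> (Suc m))) \<in> {1..Suc m}" using permutes_in_image[OF \<sigma>] inner by auto
  moreover have "\<sigma> (Suc (inv \<sigma> (Suc m))) \<noteq> Suc m" using permutes_Suc_max_position(3)[OF \<sigma>] by simp
  ultimately show ?thesis using inner unfolding after_max_def by auto
qed

lemma after_max_mem_Suc:
  assumes "\<sigma> permutes {1..Suc m}"
  shows "after_max m \<sigma> \<in> {1..Suc m}"
proof (cases "inv \<sigma> (Suc m) = Suc m")
  case False
  then have "inv \<sigma> (Suc m) \<le> m" using permutes_Suc_max_position(1)[OF assms] by auto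
  then show ?thesis using after_max_mem[OF assms] by auto
qed (simp add: after_max_def)

lemma after_max_eq_Suc_iff:
  assumes "\<sigma> permutes {1..Suc m}"
  shows "after_max m \<sigma> = Suc m \<longleftrightarrow> inv \<sigma> (Suc m) = Suc m"
  using after_max_mem[OF assms] permutes_Suc_max_position(1)[OF assms]
  unfolding after_max_def by (cases "inv \<sigma> (Suc m) = Suc m") auto

lemma descent_pairs_max_last:
  assumes \<sigma>: "\<sigma> permutes {1..Suc m}" and max_last: "inv \<sigma> (Suc m) = Suc m"
  shows "descent_pairs (Suc m) \<sigma> = descent_pairs m (delete_max m \<sigma>)"
proof -
  have last: "\<sigma> (Suc m) = Suc m" using permutes_Suc_max_position(2)[OF \<sigma>] max_last by simp
  have "\<sigma> m \<le> Suc m" using permutes_in_image[OF \<sigma>, of m] permutes_not_in[OF \<sigma>, of 0]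
    by (cases "m = 0") auto
  then have no_last_descent: "\<not> \<sigma> (Suc m) < \<sigma> m" using last by simp
  have unchanged: "\<And>i. i \<le> m \<Longrightarrow> delete_max m \<sigma> i = \<sigma> i" unfolding delete_max_def max_last by auto
  show ?thesis
  proof (intro set_eqI, clarify)
    fix x y
    show "(x, y) \<in> descent_pairs (Suc m) \<sigma> \<longleftrightarrow> (x, y) \<in> descent_pairs m (delete_max m \<sigma>)"
      unfolding mem_descent_pairs using unchanged no_last_descent
      by (metis Suc_leI less_Suc_eq less_imp_le_nat)
  qed
qed

lemma descent_pairs_max_inner_subset:
  assumes \<sigma>: "\<sigma> permutes {1..Suc m}" and inner: "inv \<sigma> (Suc m) \<le> m"
  shows "descent_pairs (Suc m) \<sigma>
           \<subseteq> {q \<in> descent_pairs m (delete_max m \<sigma>). snd q \<noteq> after_max m \<sigma>} \<union> {(Suc m, after_max m \<sigma>)}"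
proof (rule subrelI)
  define p where "p = inv \<sigma> (Suc m)"
  note pos = permutes_Suc_max_position[OF \<sigma>, folded p_def]
  have b: "after_max m \<sigma> = \<sigma> (Suc p)" using inner unfolding after_max_def p_def by simp
  fix x y assume "(x, y) \<in> descent_pairs (Suc m) \<sigma>"
  then obtain i where i: "1 \<le> i" "i < Suc m" "\<sigma> i = x" "\<sigma> (Suc i) = y" "y < x"
    unfolding mem_descent_pairs by blast
  show "(x, y) \<in> {q \<in> descent_pairs m (delete_max m \<sigma>). snd q \<noteq> after_max m \<sigma>} \<union> {(Suc m, after_max m \<sigma>)}"
  proof (cases "(x, y) = (Suc m, after_max m \<sigma>)")
    case new: False
    have "\<sigma> i \<le> Suc m" using permutes_in_image[OF \<sigma>, of i] i by auto
    \<comment> \<open>a pair ending in \<open>m+1\<close> is never a descent\<close>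
    then have "Suc i \<noteq> p" using i pos(2) by auto
    moreover have "i \<noteq> p" using new i pos(2) b by auto
    ultimately consider "Suc i < p" | "p < i" by linarith
    then have shortened: "(x, y) \<in> descent_pairs m (delete_max m \<sigma>)"
    proof cases
      case 1
      then show ?thesis unfolding mem_descent_pairs using i inner delete_max_before[of _ \<sigma> m] p_def
        by (intro exI[of _ i]) auto
    next
      case 2
      then show ?thesis unfolding mem_descent_pairs using i pos(1) delete_max_after[of \<sigma> m] p_def
        by (intro exI[of _ "i - 1"]) auto
    qed
    have "\<sigma> (Suc i) \<noteq> \<sigma> (Suc p)"
    proof
      assume "\<sigma> (Suc i) = \<sigma> (Suc p)"
      then have "Suc i = Suc p" by (rule injD[OF permutes_inj[OF \<sigma>]])
      with \<open>i \<noteq> p\<close> show False by simp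
    qed
    with shortened show ?thesis using i(4) b by simp
  qed simp
qed

lemma descent_pairs_max_inner_supset:
  assumes \<sigma>: "\<sigma> permutes {1..Suc m}" and inner: "inv \<sigma> (Suc m) \<le> m"
  shows "{q \<in> descent_pairs m (delete_max m \<sigma>). snd q \<noteq> after_max m \<sigma>} \<union> {(Suc m, after_max m \<sigma>)}
           \<subseteq> descent_pairs (Suc m) \<sigma>"
proof -
  define p where "p = inv \<sigma> (Suc m)"
  note pos = permutes_Suc_max_position[OF \<sigma>, folded p_def]
  have b: "after_max m \<sigma> = \<sigma> (Suc p)" "after_max m \<sigma> \<in> {1..m}"
    using inner after_max_mem[OF \<sigma> inner] unfolding after_max_def p_def by auto
  have "(Suc m, after_max m \<sigma>) \<in> descent_pairs (Suc m) \<sigma>"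
    unfolding mem_descent_pairs using b pos inner p_def by (intro exI[of _ p]) auto
  moreover have "(x, y) \<in> descent_pairs (Suc m) \<sigma>"
    if xy: "(x, y) \<in> descent_pairs m (delete_max m \<sigma>)" "y \<noteq> after_max m \<sigma>" for x y
  proof -
    obtain j where j: "1 \<le> j" "j < m" "delete_max m \<sigma> j = x" "delete_max m \<sigma> (Suc j) = y" "y < x"
      using xy(1) unfolding mem_descent_pairs by blast
    have "Suc j \<noteq> p" using j(4) xy(2) b(1) delete_max_after[of \<sigma> m p] inner p_def by auto
    then consider "Suc j < p" | "p \<le> j" by linarith
    then show ?thesis
    proof cases
      case 1
      then show ?thesis unfolding mem_descent_pairs using j delete_max_before[of _ \<sigma> m] p_def
        by (intro exI[of _ j]) auto
    next
      case 2
      then show ?thesis unfolding mem_descent_pairs using j delete_max_after[of \<sigma> m] p_def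
        by (intro exI[of _ "Suc j"]) auto
    qed
  qed
  ultimately show ?thesis by auto
qed

lemma descent_pairs_max_inner:
  assumes "\<sigma> permutes {1..Suc m}" and "inv \<sigma> (Suc m) \<le> m"
  shows "descent_pairs (Suc m) \<sigma>
           = {q \<in> descent_pairs m (delete_max m \<sigma>). snd q \<noteq> after_max m \<sigma>} \<union> {(Suc m, after_max m \<sigma>)}"
  using descent_pairs_max_inner_subset[OF assms] descent_pairs_max_inner_supset[OF assms] by blast

lemma inj_on_delete_max_after_max:
  "inj_on (\<lambda>\<sigma>. (delete_max m \<sigma>, after_max m \<sigma>)) (perms (Suc m))"
proof (rule inj_onI, clarsimp)
  fix \<sigma>1 \<sigma>2
  assume "\<sigma>1 \<in> perms (Suc m)" "\<sigma>2 \<in> perms (Suc m)"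
    and del: "delete_max m \<sigma>1 = delete_max m \<sigma>2" and aft: "after_max m \<sigma>1 = after_max m \<sigma>2"
  then have \<sigma>1: "\<sigma>1 permutes {1..Suc m}" and \<sigma>2: "\<sigma>2 permutes {1..Suc m}" by (auto simp: perms_def)
  define p1 where "p1 = inv \<sigma>1 (Suc m)"
  define p2 where "p2 = inv \<sigma>2 (Suc m)"
  note pos1 = permutes_Suc_max_position[OF \<sigma>1, folded p1_def]
  note pos2 = permutes_Suc_max_position[OF \<sigma>2, folded p2_def]
  have same_pos: "p1 = p2"
  proof (cases "p1 = Suc m")
    case False
    then have "p1 \<le> m" "p2 \<le> m"
      using pos1(1) pos2(1) aft after_max_eq_Suc_iff[OF \<sigma>1] after_max_eq_Suc_iff[OF \<sigma>2] p1_def p2_def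
      by auto
    then have "delete_max m \<sigma>1 p1 = delete_max m \<sigma>1 p2"
      using delete_max_at_max[of \<sigma>1 m] delete_max_at_max[of \<sigma>2 m] del aft p1_def p2_def by simp
    moreover have "p1 \<in> {1..m}" "p2 \<in> {1..m}" using \<open>p1 \<le> m\<close> \<open>p2 \<le> m\<close> pos1(1) pos2(1) by auto
    ultimately show ?thesis using permutes_inj_on[OF delete_max_permutes[OF \<sigma>1]] by (auto dest: inj_onD)
  qed (use aft after_max_eq_Suc_iff[OF \<sigma>1] after_max_eq_Suc_iff[OF \<sigma>2] p1_def p2_def in auto)
  show "\<sigma>1 = \<sigma>2"
  proof
    fix i
    consider "i < p1" | "i = p1" | "p1 < i" "i \<le> Suc m" | "Suc m < i" by linarith
    then show "\<sigma>1 i = \<sigma>2 i"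
    proof cases
      case 1
      then show ?thesis
        using fun_cong[OF del, of i] delete_max_before[of i \<sigma>1 m] delete_max_before[of i \<sigma>2 m]
          same_pos p1_def p2_def by simp
    next
      case 2
      then show ?thesis using pos1(2) pos2(2) same_pos by simp
    next
      case 3
      then have "Suc (i - 1) = i" "p1 \<le> i - 1" "i - 1 \<le> m" by auto
      then show ?thesis
        using fun_cong[OF del, of "i - 1"] delete_max_after[of \<sigma>1 m "i - 1"]
          delete_max_after[of \<sigma>2 m "i - 1"] same_pos p1_def p2_def by simp
    next
      case 4
      then show ?thesis using permutes_not_in[OF \<sigma>1] permutes_not_in[OF \<sigma>2] by auto
    qed
  qed
qed

text \<open>The image of \<open>Suc m\<close> recovers \<open>b\<close>, so the transposition can be cancelled.\<close>

lemma inj_on_transpose_Suc_comp: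
  "inj_on (\<lambda>(\<rho>, b). Transposition.transpose (Suc m) b \<circ> \<rho>) (perms m \<times> UNIV)"
proof (rule inj_onI, clarsimp)
  fix \<rho>1 \<rho>2 b1 b2
  assume "\<rho>1 \<in> perms m" "\<rho>2 \<in> perms m"
    and eq: "Transposition.transpose (Suc m) b1 \<circ> \<rho>1 = Transposition.transpose (Suc m) b2 \<circ> \<rho>2"
  then have "\<rho>1 (Suc m) = Suc m" "\<rho>2 (Suc m) = Suc m"
    using permutes_not_in[of _ "{1..m}" "Suc m"] by (auto simp: perms_def)
  then have b: "b1 = b2" using fun_cong[OF eq, of "Suc m"] by simp
  have "\<rho>1 x = \<rho>2 x" for x
    using fun_cong[OF eq, of x] b by (auto dest: injD[OF inj_transpose])
  then show "\<rho>1 = \<rho>2 \<and> b1 = b2" using b by auto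
qed

lemma perms_descent_pairs_to_drop_pairs:
  "\<exists>F. bij_betw F (perms m) (perms m) \<and> (\<forall>\<sigma> \<in> perms m. drop_pairs m (F \<sigma>) = descent_pairs m \<sigma>)"
proof (induction m)
  case 0
  have "drop_pairs 0 \<sigma> = descent_pairs 0 \<sigma>" for \<sigma>
    by (auto simp: mem_drop_pairs mem_descent_pairs)
  then show ?case using bij_betw_id by (metis id_apply)
next
  case (Suc m)
  then obtain F where F: "bij_betw F (perms m) (perms m)"
    and F_pairs: "\<forall>\<sigma> \<in> perms m. drop_pairs m (F \<sigma>) = descent_pairs m \<sigma>"
    by blast
  define G where "G \<sigma> = Transposition.transpose (Suc m) (after_max m \<sigma>) \<circ> F (delete_max m \<sigma>)" for \<sigma>
  have del: "delete_max m \<sigma> \<in> perms m" and F_del: "F (delete_max m \<sigma>) permutes {1..m}"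
    if "\<sigma> \<in> perms (Suc m)" for \<sigma>
    using that delete_max_permutes F unfolding perms_def bij_betw_def by auto
  have G_pairs: "drop_pairs (Suc m) (G \<sigma>) = descent_pairs (Suc m) \<sigma>" if s: "\<sigma> \<in> perms (Suc m)" for \<sigma>
  proof -
    have \<sigma>: "\<sigma> permutes {1..Suc m}" using s by (simp add: perms_def)
    show ?thesis
    proof (cases "inv \<sigma> (Suc m) = Suc m")
      case True
      then show ?thesis unfolding G_def after_max_def
        using drop_pairs_Suc[OF F_del[OF s]] descent_pairs_max_last[OF \<sigma>] F_pairs del[OF s] by simp
    next
      case False
      then have "inv \<sigma> (Suc m) \<le> m" using permutes_Suc_max_position(1)[OF \<sigma>] by auto
      then show ?thesis unfolding G_def
        using drop_pairs_transpose_Suc[OF F_del[OF s] after_max_mem[OF \<sigma>]]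
          descent_pairs_max_inner[OF \<sigma>] F_pairs del[OF s] by simp
    qed
  qed
  have "G \<sigma> \<in> perms (Suc m)" if s: "\<sigma> \<in> perms (Suc m)" for \<sigma>
  proof -
    have "after_max m \<sigma> \<in> {1..Suc m}"
      using after_max_mem_Suc s by (simp add: perms_def)
    then have "Transposition.transpose (Suc m) (after_max m \<sigma>) permutes {1..Suc m}"
      by (intro permutes_swap_id) auto
    moreover have "F (delete_max m \<sigma>) permutes {1..Suc m}"
      using permutes_subset[OF F_del[OF s]] by auto
    ultimately show ?thesis unfolding G_def perms_def by (simp add: permutes_compose)
  qed
  moreover have "inj_on G (perms (Suc m))"
  proof (rule inj_onI)
    fix \<sigma>1 \<sigma>2 assume s1: "\<sigma>1 \<in> perms (Suc m)" and s2: "\<sigma>2 \<in> perms (Suc m)" and "G \<sigma>1 = G \<sigma>2"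
    then have "(F (delete_max m \<sigma>1), after_max m \<sigma>1) = (F (delete_max m \<sigma>2), after_max m \<sigma>2)"
      using F_del[OF s1] F_del[OF s2]
      by (intro inj_onD[OF inj_on_transpose_Suc_comp]) (auto simp: G_def perms_def)
    then have "delete_max m \<sigma>1 = delete_max m \<sigma>2" "after_max m \<sigma>1 = after_max m \<sigma>2"
      using F del[OF s1] del[OF s2] by (auto simp: bij_betw_def dest: inj_onD)
    then show "\<sigma>1 = \<sigma>2" using inj_onD[OF inj_on_delete_max_after_max] s1 s2 by auto
  qed
  moreover have "finite (perms (Suc m))" unfolding perms_def by (rule finite_permutations) simp
  ultimately have "bij_betw G (perms (Suc m)) (perms (Suc m))"
    by (metis bij_betw_def endo_inj_surj image_subsetI)
  then show ?case using G_pairs by blast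
qed

lemma bij_betw_restrict_Collect:
  assumes "bij_betw F A A" and "\<forall>x \<in> A. Q (F x) = P x"
  shows "bij_betw F {x \<in> A. P x} {y \<in> A. Q y}"
proof (rule bij_betw_subset[OF assms(1)])
  show "F ` {x \<in> A. P x} = {y \<in> A. Q y}"
    using assms unfolding bij_betw_def by force
qed auto

theorem mainTheorem5:
  fixes n :: nat
  assumes "n \<ge> 1"
  shows "\<exists>f. bij_betw f (X_set n) (R_set n) \<and>
              (\<forall>\<sigma> \<in> X_set n. drop_num (2*n) (f \<sigma>) = des (2*n) \<sigma>)"
proof -
  obtain F where F: "bij_betw F (perms (2*n)) (perms (2*n))"
    and pairs: "\<forall>\<sigma> \<in> perms (2*n). drop_pairs (2*n) (F \<sigma>) = descent_pairs (2*n) \<sigma>"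
    using perms_descent_pairs_to_drop_pairs by blast
  have "bij_betw F (X_set n) (R_set n)"
    unfolding X_set_descent_pairs R_set_drop_pairs
    by (rule bij_betw_restrict_Collect[OF F]) (simp add: pairs)
  moreover have "drop_num (2*n) (F \<sigma>) = des (2*n) \<sigma>" if "\<sigma> \<in> X_set n" for \<sigma>
  proof -
    have "\<sigma> \<in> perms (2*n)" using that by (simp add: X_set_def)
    then show ?thesis
      using pairs card_drop_pairs card_descent_pairs permutes_inj by (metis perms_def mem_Collect_eq)
  qed
  ultimately show ?thesis by blast
qed

end
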